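(* Let $\varphi$ be a growth function on $\mathbb{R}^n\times[0,\infty)$. Then the weak Musielak–Orlicz space $WL^\varphi(\mathbb{R}^n)$ is complete with respect to its quasi-norm $\|\cdot\|_{WL^\varphi}$.
   Context: A Musielak–Orlicz function is a map $\varphi:\mathbb{R}^n\times[0,\infty)\to[0,\infty)$ such that for every $x$, $\varphi(x,\cdot)$ is an Orlicz function (nondecreasing, $\varphi(x,0)=0$, $\varphi(x,t)>0$ for $t>0$, $\lim_{t\to\infty}\varphi(x,t)=\infty$), and for every $t$, $\varphi(\cdot,t)$ is measurable. $\varphi$ is of uniformly lower (resp. upper) type $p$ if there is $C>0$ with $\varphi(x,st)\le Cs^p\varphi(x,t)$ for all $x$, $t\ge0$, $s\in(0,1]$ (resp. $s\in[1,\infty)$). For $q\in(1,\infty)$, $\varphi\in\mathbb{A}_q$ means there is $C$ such that for every ball $B$ and $t>0$, $\frac{1}{|B|}\int_B\varphi(x,t)\,dx\,\big(\frac{1}{|B|}\int_B\varphi(x,t)^{-1/(q-1)}dx\big)^{q-1}\le C$; $\varphi\in\mathbb{A}_1$ means $\frac{1}{|B|}\int_B\varphi(x,t)\,dx\cdot\operatorname{ess\,sup}_{B}\varphi(\cdot,t)^{-1}\le C$; $\mathbb{A}_\infty:=\bigcup_{q\ge1}\mathbb{A}_q$. A growth function is a Musielak–Orlicz function in $\mathbb{A}_\infty$ of uniformly lower type $p$ for some $p\in(0,1]$ and of uniformly upper type $1$. For $E\subset\mathbb{R}^n$, $\varphi(E,t):=\int_E\varphi(x,t)\,dx$ and $\{|f|>t\}:=\{x:|f(x)|>t\}$.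 $WL^\varphi(\mathbb{R}^n)$ is the set of measurable $f$ such that $\sup_{t\in(0,\infty)}\varphi(\{|f|>t\},t/\lambda)<\infty$ for some $\lambda>0$, with $\|f\|_{WL^\varphi}:=\inf\{\lambda>0:\sup_{t\in(0,\infty)}\varphi(\{|f|>t\},t/\lambda)\le1\}$. *)

theory Defs
  imports "HOL-Analysis.Analysis" "HOL-Probability.Essential_Supremum"
begin

type_synonym 'n MOfun = "real ^ 'n \<Rightarrow> real \<Rightarrow> real"

definition orlicz_fun :: "(real \<Rightarrow> real) \<Rightarrow> bool" where
  "orlicz_fun g \<longleftrightarrow> mono_on {0..} g \<and> g 0 = 0 \<and> (\<forall>t>0. g t > 0) \<and> (g \<longlongrightarrow> \<infinity>) at_top"

definition musielak_orlicz :: "'n::finite MOfun \<Rightarrow> bool" where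
  "musielak_orlicz \<phi> \<longleftrightarrow> (\<forall>x. orlicz_fun (\<phi> x)) \<and>
     (\<forall>t\<ge>0. (\<lambda>x. \<phi> x t) \<in> borel_measurable lebesgue)"

definition unif_lower_type :: "'n::finite MOfun \<Rightarrow> real \<Rightarrow> bool" where
  "unif_lower_type \<phi> p \<longleftrightarrow> (\<exists>C>0. \<forall>x t s. t \<ge> 0 \<longrightarrow> 0 < s \<longrightarrow> s \<le> 1 \<longrightarrow>
      \<phi> x (s * t) \<le> C * s powr p * \<phi> x t)"

definition unif_upper_type :: "'n::finite MOfun \<Rightarrow> real \<Rightarrow> bool" where
  "unif_upper_type \<phi> p \<longleftrightarrow> (\<exists>C>0. \<forall>x t s. t \<ge> 0 \<longrightarrow> 1 \<le> s \<longrightarrow>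
      \<phi> x (s * t) \<le> C * s powr p * \<phi> x t)"

definition phiE :: "'n::finite MOfun \<Rightarrow> (real ^ 'n) set \<Rightarrow> real \<Rightarrow> ennreal" where
  "phiE \<phi> E t = (\<integral>\<^sup>+ x \<in> E. ennreal (\<phi> x t) \<partial>lebesgue)"

text \<open>Uniform Muckenhoupt class A_q, q > 1 (the averages are required to be finite,
  which is implied by the bound since both averages are positive).\<close>
definition A_q :: "real \<Rightarrow> 'n::finite MOfun \<Rightarrow> bool" where
  "A_q q \<phi> \<longleftrightarrow> (\<exists>C. \<forall>x0 r t. r > 0 \<longrightarrow> t > 0 \<longrightarrow>
     phiE \<phi> (ball x0 r) t < \<infinity> \<and>
     (\<integral>\<^sup>+ x \<in> ball x0 r. ennreal (\<phi> x t powr (-1 / (q - 1))) \<partial>lebesgue) < \<infinity> \<and>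
     (enn2real (phiE \<phi> (ball x0 r) t) / measure lebesgue (ball x0 r)) *
     (enn2real (\<integral>\<^sup>+ x \<in> ball x0 r. ennreal (\<phi> x t powr (-1 / (q - 1))) \<partial>lebesgue)
        / measure lebesgue (ball x0 r)) powr (q - 1) \<le> C)"

definition A_1 :: "'n::finite MOfun \<Rightarrow> bool" where
  "A_1 \<phi> \<longleftrightarrow> (\<exists>C. \<forall>x0 r t. r > 0 \<longrightarrow> t > 0 \<longrightarrow>
     phiE \<phi> (ball x0 r) t < \<infinity> \<and>
     ereal (enn2real (phiE \<phi> (ball x0 r) t) / measure lebesgue (ball x0 r)) *
       esssup (restrict_space lebesgue (ball x0 r)) (\<lambda>x. ereal (1 / \<phi> x t)) \<le> ereal C)"

definition A_infty :: "'n::finite MOfun \<Rightarrow> bool" where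
  "A_infty \<phi> \<longleftrightarrow> A_1 \<phi> \<or> (\<exists>q>1. A_q q \<phi>)"

definition growth_function :: "'n::finite MOfun \<Rightarrow> bool" where
  "growth_function \<phi> \<longleftrightarrow> musielak_orlicz \<phi> \<and> A_infty \<phi> \<and>
     (\<exists>p. 0 < p \<and> p \<le> 1 \<and> unif_lower_type \<phi> p) \<and> unif_upper_type \<phi> 1"

definition WL :: "'n::finite MOfun \<Rightarrow> (real ^ 'n \<Rightarrow> real) set" where
  "WL \<phi> = {f. f \<in> borel_measurable lebesgue \<and>
     (\<exists>lam>0. (SUP t\<in>{0<..}. phiE \<phi> {x. \<bar>f x\<bar> > t} (t / lam)) < \<infinity>)}"

definition WL_norm :: "'n::finite MOfun \<Rightarrow> (real ^ 'n \<Rightarrow> real) \<Rightarrow> real" where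
  "WL_norm \<phi> f = Inf {lam. lam > 0 \<and> (SUP t\<in>{0<..}. phiE \<phi> {x. \<bar>f x\<bar> > t} (t / lam)) \<le> 1}"

end

(* Everything is controlled by the weak modular
     M(f, lam) = sup_{t>0} phi({|f| > t}, t / lam):
   ||f|| < e gives M(f, e) <= 1, M(f, e) <= 1 gives ||f|| <= e, and M(h, 2 lam) <= M(f, lam) + M(g, lam)
   whenever |h| <= |f| + |g|.  From a Cauchy sequence pick a subsequence with
   M(F_{k(j+1)} - F_{k(j)}, 4^-j) <= 1.  The set E_j where the j-th increment exceeds 2^-j then has
   phi(E_j, 2^j) <= 1, hence phi(E_j, 1) <= C 2^(-jp) by the uniform lower type p.  Borel-Cantelli for
   the measure phi(x, 1) dx, which has the same null sets as Lebesgue measure, makes the subsequence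
   converge a.e. to some f, and Fatou's lemma, applied for each t, carries the Cauchy bound
   M(F_k - F_m, e) <= 1 to the limit in m.  Only the lower type enters. *)

theory Submission
  imports Defs
begin

definition weak_modular :: "'n::finite MOfun \<Rightarrow> (real ^ 'n \<Rightarrow> real) \<Rightarrow> real \<Rightarrow> ennreal" where
  "weak_modular \<phi> f lam = (SUP t\<in>{0<..}. phiE \<phi> {x. \<bar>f x\<bar> > t} (t / lam))"

lemma WL_eq_weak_modular:
  "WL \<phi> = {f. f \<in> borel_measurable lebesgue \<and> (\<exists>lam>0. weak_modular \<phi> f lam < \<infinity>)}"
  unfolding WL_def weak_modular_def by simp

lemma WL_norm_eq_weak_modular: "WL_norm \<phi> f = Inf {lam. lam > 0 \<and> weak_modular \<phi> f lam \<le> 1}"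
  unfolding WL_norm_def weak_modular_def by simp

lemma phiE_le_weak_modular: "0 < t \<Longrightarrow> phiE \<phi> {x. t < \<bar>f x\<bar>} (t / lam) \<le> weak_modular \<phi> f lam"
  unfolding weak_modular_def by (intro SUP_upper) auto

lemma musielak_orlicz_mono: "musielak_orlicz \<phi> \<Longrightarrow> 0 \<le> s \<Longrightarrow> s \<le> t \<Longrightarrow> \<phi> x s \<le> \<phi> x t"
  unfolding musielak_orlicz_def orlicz_fun_def by (meson atLeast_iff mono_onD order_trans)

lemma musielak_orlicz_nonneg: "musielak_orlicz \<phi> \<Longrightarrow> 0 \<le> t \<Longrightarrow> 0 \<le> \<phi> x t"
  using musielak_orlicz_mono[of \<phi> 0 t x] unfolding musielak_orlicz_def orlicz_fun_def by simp

lemma musielak_orlicz_pos: "musielak_orlicz \<phi> \<Longrightarrow> 0 < t \<Longrightarrow> 0 < \<phi> x t"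
  unfolding musielak_orlicz_def orlicz_fun_def by blast

lemma musielak_orlicz_measurable:
  "musielak_orlicz \<phi> \<Longrightarrow> 0 \<le> t \<Longrightarrow> (\<lambda>x. \<phi> x t) \<in> borel_measurable lebesgue"
  unfolding musielak_orlicz_def by blast

lemma sets_lebesgue_abs_gt:
  fixes f :: "real ^ 'n::finite \<Rightarrow> real"
  assumes [measurable]: "f \<in> borel_measurable lebesgue"
  shows "{x. t < \<bar>f x\<bar>} \<in> sets lebesgue"
proof -
  have "{x. t < \<bar>f x\<bar>} = {x \<in> space lebesgue. t < \<bar>f x\<bar>}" by simp
  also have "\<dots> \<in> sets lebesgue" by measurable
  finally show ?thesis .
qed

lemma phiE_mono:
  assumes "musielak_orlicz \<phi>" "0 \<le> s" "s \<le> t"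
  shows "phiE \<phi> E s \<le> phiE \<phi> E t"
  unfolding phiE_def
  by (intro nn_integral_mono) (auto simp: indicator_def intro!: ennreal_leI musielak_orlicz_mono[OF assms])

lemma unif_lower_type_phiE:
  assumes mo: "musielak_orlicz \<phi>" and "unif_lower_type \<phi> p"
  obtains C where "C > 0"
    "\<And>E s u. E \<in> sets lebesgue \<Longrightarrow> 0 < s \<Longrightarrow> s \<le> 1 \<Longrightarrow> 0 \<le> u \<Longrightarrow>
       phiE \<phi> E (s * u) \<le> ennreal (C * s powr p) * phiE \<phi> E u"
proof -
  obtain C where C: "C > 0"
    and lt: "\<And>x t s. t \<ge> 0 \<Longrightarrow> 0 < s \<Longrightarrow> s \<le> 1 \<Longrightarrow> \<phi> x (s * t) \<le> C * s powr p * \<phi> x t"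
    using assms(2) unfolding unif_lower_type_def by blast
  have "phiE \<phi> E (s * u) \<le> ennreal (C * s powr p) * phiE \<phi> E u"
    if E[measurable]: "E \<in> sets lebesgue" and s: "0 < s" "s \<le> 1" and u: "0 \<le> u" for E s u
  proof -
    note [measurable] = musielak_orlicz_measurable[OF mo u]
    have "phiE \<phi> E (s * u) \<le>
        (\<integral>\<^sup>+ x. ennreal (C * s powr p) * (ennreal (\<phi> x u) * indicator E x) \<partial>lebesgue)"
      unfolding phiE_def
      using lt[OF u s] musielak_orlicz_nonneg[OF mo u] C
      by (intro nn_integral_mono) (auto simp: indicator_def ennreal_mult[symmetric] intro!: ennreal_leI)
    also have "\<dots> = ennreal (C * s powr p) * phiE \<phi> E u"
      unfolding phiE_def by (intro nn_integral_cmult) measurable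
    finally show ?thesis .
  qed
  with C that show ?thesis by blast
qed

lemma weak_modular_antimono:
  assumes "musielak_orlicz \<phi>" "0 < lam" "lam \<le> lam'"
  shows "weak_modular \<phi> f lam' \<le> weak_modular \<phi> f lam"
  unfolding weak_modular_def
proof (intro SUP_mono bexI)
  fix t :: real assume "t \<in> {0<..}"
  then show "phiE \<phi> {x. t < \<bar>f x\<bar>} (t / lam') \<le> phiE \<phi> {x. t < \<bar>f x\<bar>} (t / lam)"
    using assms by (intro phiE_mono) (auto intro: divide_left_mono)
qed auto

lemma weak_modular_quasi_triangle:
  assumes mo: "musielak_orlicz \<phi>"
    and [measurable]: "f \<in> borel_measurable lebesgue" "g \<in> borel_measurable lebesgue"
    and h: "\<And>x. \<bar>h x\<bar> \<le> \<bar>f x\<bar> + \<bar>g x\<bar>" and lam: "0 < lam"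
  shows "weak_modular \<phi> h (2 * lam) \<le> weak_modular \<phi> f lam + weak_modular \<phi> g lam"
  unfolding weak_modular_def[of _ h]
proof (intro SUP_least)
  fix t :: real assume t: "t \<in> {0<..}"
  define u where "u = (t / 2) / lam"
  have u: "0 \<le> u" using t lam by (simp add: u_def)
  note [measurable] = musielak_orlicz_measurable[OF mo u]
  have "phiE \<phi> {x. t < \<bar>h x\<bar>} u \<le>
     (\<integral>\<^sup>+ x. ennreal (\<phi> x u) * indicator {x. t/2 < \<bar>f x\<bar>} x
            + ennreal (\<phi> x u) * indicator {x. t/2 < \<bar>g x\<bar>} x \<partial>lebesgue)"
    unfolding phiE_def
  proof (intro nn_integral_mono)
    fix x
    have "t < \<bar>h x\<bar> \<Longrightarrow> t/2 < \<bar>f x\<bar> \<or> t/2 < \<bar>g x\<bar>" using h[of x] by linarith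
    then show "ennreal (\<phi> x u) * indicator {x. t < \<bar>h x\<bar>} x \<le>
        ennreal (\<phi> x u) * indicator {x. t/2 < \<bar>f x\<bar>} x + ennreal (\<phi> x u) * indicator {x. t/2 < \<bar>g x\<bar>} x"
      by (auto simp: indicator_def)
  qed
  also have "\<dots> = phiE \<phi> {x. t/2 < \<bar>f x\<bar>} u + phiE \<phi> {x. t/2 < \<bar>g x\<bar>} u"
    unfolding phiE_def by (intro nn_integral_add) measurable
  also have "\<dots> \<le> weak_modular \<phi> f lam + weak_modular \<phi> g lam"
    unfolding u_def using t by (intro add_mono phiE_le_weak_modular) auto
  finally show "phiE \<phi> {x. \<bar>h x\<bar> > t} (t / (2 * lam)) \<le> weak_modular \<phi> f lam + weak_modular \<phi> g lam"
    by (simp add: u_def)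
qed

lemma WL_diff:
  assumes mo: "musielak_orlicz \<phi>" and "f \<in> WL \<phi>" "g \<in> WL \<phi>"
  shows "(\<lambda>x. f x - g x) \<in> WL \<phi>"
proof -
  obtain l1 l2 where [measurable]: "f \<in> borel_measurable lebesgue" "g \<in> borel_measurable lebesgue"
    and l: "l1 > 0" "weak_modular \<phi> f l1 < \<infinity>" "l2 > 0" "weak_modular \<phi> g l2 < \<infinity>"
    using assms(2,3) unfolding WL_eq_weak_modular by auto
  define l where "l = max l1 l2"
  have "l > 0" using l by (simp add: l_def)
  then have "weak_modular \<phi> (\<lambda>x. f x - g x) (2 * l) \<le> weak_modular \<phi> f l + weak_modular \<phi> g l"
    by (intro weak_modular_quasi_triangle[OF mo]) auto
  also have "\<dots> \<le> weak_modular \<phi> f l1 + weak_modular \<phi> g l2"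
    using l by (intro add_mono weak_modular_antimono[OF mo]) (auto simp: l_def)
  also have "\<dots> < \<infinity>" using l by simp
  finally show ?thesis unfolding WL_eq_weak_modular using \<open>l > 0\<close>
    by (auto intro!: exI[of _ "2 * l"])
qed

lemma unif_lower_type_weak_modular:
  assumes mo: "musielak_orlicz \<phi>" and "unif_lower_type \<phi> p"
  obtains C where "C > 0"
    "\<And>f s lam. f \<in> borel_measurable lebesgue \<Longrightarrow> 0 < s \<Longrightarrow> s \<le> 1 \<Longrightarrow> 0 < lam \<Longrightarrow>
       weak_modular \<phi> f (lam / s) \<le> ennreal (C * s powr p) * weak_modular \<phi> f lam"
proof -
  obtain C where C: "C > 0" and scale: "\<And>E s u. E \<in> sets lebesgue \<Longrightarrow> 0 < s \<Longrightarrow> s \<le> 1 \<Longrightarrow> 0 \<le> u \<Longrightarrow>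
       phiE \<phi> E (s * u) \<le> ennreal (C * s powr p) * phiE \<phi> E u"
    using unif_lower_type_phiE[OF assms] by blast
  have "weak_modular \<phi> f (lam / s) \<le> ennreal (C * s powr p) * weak_modular \<phi> f lam"
    if f: "f \<in> borel_measurable lebesgue" and s: "0 < s" "s \<le> 1" and lam: "0 < lam" for f s lam
    unfolding weak_modular_def[of _ _ "lam / s"]
  proof (intro SUP_least)
    fix t :: real assume t: "t \<in> {0<..}"
    have "phiE \<phi> {x. t < \<bar>f x\<bar>} (s * (t / lam)) \<le> ennreal (C * s powr p) * phiE \<phi> {x. t < \<bar>f x\<bar>} (t / lam)"
      using t lam by (intro scale sets_lebesgue_abs_gt f s) auto
    also have "\<dots> \<le> ennreal (C * s powr p) * weak_modular \<phi> f lam"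
      using t by (intro mult_left_mono phiE_le_weak_modular) auto
    finally show "phiE \<phi> {x. \<bar>f x\<bar> > t} (t / (lam / s)) \<le> ennreal (C * s powr p) * weak_modular \<phi> f lam"
      using s by (simp add: field_simps)
  qed
  with C that show ?thesis by blast
qed

text \<open>\<open>WL_norm \<phi> f\<close> is an infimum over \<open>{lam > 0. weak_modular \<phi> f lam \<le> 1}\<close>; this lemma
  shows that set is nonempty, so the quasi-norm is never the junk value \<open>Inf {}\<close>.\<close>

lemma WL_imp_weak_modular_le_1:
  assumes mo: "musielak_orlicz \<phi>" and lt: "unif_lower_type \<phi> p" and p: "p > 0" and "f \<in> WL \<phi>"
  shows "\<exists>lam>0. weak_modular \<phi> f lam \<le> 1"
proof -
  obtain lam where f: "f \<in> borel_measurable lebesgue" and lam: "lam > 0" "weak_modular \<phi> f lam < \<infinity>"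
    using assms(4) unfolding WL_eq_weak_modular by auto
  obtain C where C: "C > 0" and scale: "\<And>f s lam. f \<in> borel_measurable lebesgue \<Longrightarrow> 0 < s \<Longrightarrow>
       s \<le> 1 \<Longrightarrow> 0 < lam \<Longrightarrow> weak_modular \<phi> f (lam / s) \<le> ennreal (C * s powr p) * weak_modular \<phi> f lam"
    using unif_lower_type_weak_modular[OF mo lt] by blast
  define a where "a = enn2real (weak_modular \<phi> f lam)"
  have a: "weak_modular \<phi> f lam = ennreal a" "0 \<le> a"
    using lam by (auto simp: a_def less_top[symmetric])
  define s where "s = min 1 ((1 / (C * (a + 1))) powr (1 / p))"
  have s: "0 < s" "s \<le> 1" using C a by (auto simp: s_def)
  have "s powr p \<le> ((1 / (C * (a + 1))) powr (1 / p)) powr p"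
    using s p by (intro powr_mono2) (auto simp: s_def)
  also have "\<dots> = 1 / (C * (a + 1))" using p C a by (simp add: powr_powr)
  finally have "C * s powr p \<le> C * (1 / (C * (a + 1)))"
    using C by (intro mult_left_mono) auto
  also have "\<dots> = 1 / (a + 1)" using C by simp
  finally have "C * s powr p \<le> 1 / (a + 1)" .
  then have "C * s powr p * a \<le> 1 / (a + 1) * a"
    using a by (intro mult_right_mono)
  also have "\<dots> \<le> 1" using a by (simp add: field_simps)
  finally have small: "C * s powr p * a \<le> 1" .
  have "weak_modular \<phi> f (lam / s) \<le> ennreal (C * s powr p) * ennreal a"
    using scale[OF f s lam(1)] a by simp
  also have "\<dots> = ennreal (C * s powr p * a)" using C a by (simp add: ennreal_mult)
  also have "\<dots> \<le> 1" using small by simp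
  finally have "weak_modular \<phi> f (lam / s) \<le> 1" .
  then show ?thesis using lam s by (intro exI[of _ "lam / s"]) auto
qed

lemma weak_modular_le_1_if_WL_norm_less:
  assumes "musielak_orlicz \<phi>" "\<exists>lam>0. weak_modular \<phi> f lam \<le> 1" "WL_norm \<phi> f < e"
  shows "weak_modular \<phi> f e \<le> 1"
proof -
  have "{lam. lam > 0 \<and> weak_modular \<phi> f lam \<le> 1} \<noteq> {}" using assms(2) by auto
  from cInf_lessD[OF this] obtain lam where "lam > 0" "weak_modular \<phi> f lam \<le> 1" "lam < e"
    using assms(3) unfolding WL_norm_eq_weak_modular by auto
  then show ?thesis using weak_modular_antimono[OF assms(1), of lam e f] by auto
qed

lemma WL_norm_le_if_weak_modular_le_1:
  assumes "0 < e" "weak_modular \<phi> f e \<le> 1"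
  shows "0 \<le> WL_norm \<phi> f" "WL_norm \<phi> f \<le> e"
  unfolding WL_norm_eq_weak_modular using assms
  by (auto intro!: cInf_greatest cInf_lower bdd_belowI[of _ 0])

lemma WL_Cauchy_imp_weak_modular_Cauchy:
  assumes mo: "musielak_orlicz \<phi>" and "unif_lower_type \<phi> p" "p > 0" and "\<And>k. F k \<in> WL \<phi>"
    and Cauchy: "\<And>\<epsilon>. \<epsilon> > 0 \<Longrightarrow> \<exists>N. \<forall>k\<ge>N. \<forall>m\<ge>N. WL_norm \<phi> (\<lambda>x. F k x - F m x) < \<epsilon>"
    and e: "e > 0"
  shows "\<exists>N. \<forall>k\<ge>N. \<forall>m\<ge>N. weak_modular \<phi> (\<lambda>x. F k x - F m x) e \<le> 1"
  using Cauchy[OF e] weak_modular_le_1_if_WL_norm_less[OF mo]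
    WL_imp_weak_modular_le_1[OF assms(1-3) WL_diff[OF mo assms(4) assms(4)]]
  by blast

lemma AE_eventually_notin_if_phiE_summable:
  assumes mo: "musielak_orlicz \<phi>" and E: "\<And>j. E j \<in> sets lebesgue"
    and bound: "\<And>j. phiE \<phi> (E j) 1 \<le> ennreal (c j)" "\<And>j. 0 \<le> c j" and "summable c"
  shows "AE x in lebesgue. eventually (\<lambda>j. x \<notin> E j) sequentially"
proof -
  define D where "D = density lebesgue (\<lambda>x. ennreal (\<phi> x 1))"
  have [measurable]: "(\<lambda>x. \<phi> x 1) \<in> borel_measurable lebesgue"
    using musielak_orlicz_measurable[OF mo] by simp
  have sets_D[simp]: "sets D = sets lebesgue" "space D = UNIV" unfolding D_def by auto
  have emeasure_D: "emeasure D (E j) = phiE \<phi> (E j) 1" for j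
    unfolding D_def phiE_def using E by (intro emeasure_density) auto
  have "AE x in D. eventually (\<lambda>j. x \<in> space D - E j) sequentially"
  proof (rule borel_cantelli_AE1)
    show "E j \<in> sets D" "emeasure D (E j) < \<infinity>" for j
      using E bound(1)[of j] by (auto simp: emeasure_D le_less_trans)
    have "measure D (E j) \<le> c j" for j
      unfolding measure_def emeasure_D using bound[of j] by (metis enn2real_ennreal enn2real_mono ennreal_less_top)
    then show "summable (\<lambda>j. measure D (E j))"
      by (intro summable_comparison_test'[OF \<open>summable c\<close>]) auto
  qed
  then have "AE x in lebesgue. 0 < ennreal (\<phi> x 1) \<longrightarrow> eventually (\<lambda>j. x \<in> space D - E j) sequentially"
    unfolding D_def by (subst (asm) AE_density) auto
  then show ?thesis
    using musielak_orlicz_pos[OF mo, of 1] by auto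
qed

lemma AE_summable_if_phiE_dyadic:
  fixes g :: "nat \<Rightarrow> real ^ 'n::finite \<Rightarrow> real"
  assumes mo: "musielak_orlicz \<phi>" and lt: "unif_lower_type \<phi> p" and p: "p > 0"
    and g[measurable]: "\<And>j. g j \<in> borel_measurable lebesgue"
    and bound: "\<And>j. phiE \<phi> {x. (1/2)^j < \<bar>g j x\<bar>} (2^j) \<le> 1"
  shows "AE x in lebesgue. summable (\<lambda>j. g j x)"
proof -
  define E where "E j = {x. (1/2)^j < \<bar>g j x\<bar>}" for j
  have E: "E j \<in> sets lebesgue" for j unfolding E_def by (rule sets_lebesgue_abs_gt) simp
  obtain C where C: "C > 0" and scale: "\<And>E s u. E \<in> sets lebesgue \<Longrightarrow> 0 < s \<Longrightarrow> s \<le> 1 \<Longrightarrow> 0 \<le> u \<Longrightarrow>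
       phiE \<phi> E (s * u) \<le> ennreal (C * s powr p) * phiE \<phi> E u"
    using unif_lower_type_phiE[OF mo lt] by blast
  have "phiE \<phi> (E j) 1 \<le> ennreal (C * ((1/2) powr p)^j)" for j
  proof -
    have "phiE \<phi> (E j) 1 = phiE \<phi> (E j) ((1/2)^j * 2^j)"
      by (simp add: power_mult_distrib[symmetric])
    also have "\<dots> \<le> ennreal (C * ((1/2)^j) powr p) * phiE \<phi> (E j) (2^j)"
      by (intro scale E) (auto intro: power_le_one)
    also have "\<dots> \<le> ennreal (C * ((1/2)^j) powr p)"
      using bound[of j] mult_left_mono[of _ 1] unfolding E_def by fastforce
    also have "((1/2::real)^j) powr p = ((1/2) powr p)^j"
      by (simp add: powr_realpow[symmetric] powr_powr mult.commute)
    finally show ?thesis by simp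
  qed
  moreover have "summable (\<lambda>j. C * ((1/2) powr p)^j)"
    using powr_less_mono2[OF p, of "1/2" 1] by (intro summable_mult summable_geometric) simp
  ultimately have "AE x in lebesgue. eventually (\<lambda>j. x \<notin> E j) sequentially"
    using C by (intro AE_eventually_notin_if_phiE_summable[OF mo E]) auto
  then show ?thesis
  proof (rule AE_mp, intro AE_I2 impI)
    fix x assume "eventually (\<lambda>j. x \<notin> E j) sequentially"
    then obtain j0 where j0: "\<And>j. j \<ge> j0 \<Longrightarrow> \<bar>g j x\<bar> \<le> (1/2)^j"
      unfolding E_def eventually_sequentially by force
    show "summable (\<lambda>j. g j x)"
    proof (rule summable_comparison_test')
      show "summable (\<lambda>j. (1/2::real)^j)" by (rule summable_geometric) simp
      show "norm (g j x) \<le> (1/2)^j" if "j \<ge> j0" for j using j0[OF that] by simp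
    qed
  qed
qed

lemma AE_convergent_imp_measurable_limit:
  fixes F :: "nat \<Rightarrow> 'a \<Rightarrow> real"
  assumes [measurable]: "\<And>j. F j \<in> borel_measurable M" and "AE x in M. convergent (\<lambda>j. F j x)"
  obtains f where "f \<in> borel_measurable M" "AE x in M. (\<lambda>j. F j x) \<longlonglongrightarrow> f x"
proof
  define f where "f x = real_of_ereal (limsup (\<lambda>j. ereal (F j x)))" for x
  show "f \<in> borel_measurable M" unfolding f_def by measurable
  show "AE x in M. (\<lambda>j. F j x) \<longlonglongrightarrow> f x"
    using assms(2)
  proof (rule AE_mp, intro AE_I2 impI)
    fix x assume "convergent (\<lambda>j. F j x)"
    then obtain L where L: "(\<lambda>j. F j x) \<longlonglongrightarrow> L" unfolding convergent_def by blast
    then have "limsup (\<lambda>j. ereal (F j x)) = ereal L"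
      by (intro lim_imp_Limsup) auto
    then show "(\<lambda>j. F j x) \<longlonglongrightarrow> f x" using L by (simp add: f_def)
  qed
qed

lemma weak_modular_Cauchy_AE_convergent_subseq:
  assumes mo: "musielak_orlicz \<phi>" and lt: "unif_lower_type \<phi> p" and p: "p > 0"
    and F[measurable]: "\<And>k. F k \<in> borel_measurable lebesgue"
    and Cauchy: "\<And>e. e > 0 \<Longrightarrow> \<exists>N. \<forall>k\<ge>N. \<forall>m\<ge>N. weak_modular \<phi> (\<lambda>x. F k x - F m x) e \<le> 1"
  obtains kk f where "\<And>j. j \<le> kk j" "f \<in> borel_measurable lebesgue"
    "AE x in lebesgue. (\<lambda>j. F (kk j) x) \<longlonglongrightarrow> f x"
proof -
  have "\<forall>j. \<exists>N. \<forall>k\<ge>N. \<forall>m\<ge>N. weak_modular \<phi> (\<lambda>x. F k x - F m x) ((1/4)^j) \<le> 1"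
    using Cauchy by simp
  then obtain N where N: "\<And>j. \<forall>k\<ge>N j. \<forall>m\<ge>N j. weak_modular \<phi> (\<lambda>x. F k x - F m x) ((1/4)^j) \<le> 1"
    by metis
  define kk where "kk j = (\<Sum>i\<le>j. N i) + j" for j
  have kk: "N j \<le> kk j" "N j \<le> kk (Suc j)" "j \<le> kk j" for j
    unfolding kk_def using member_le_sum[of j "{..j}" N] by auto
  define g where "g j x = F (kk (Suc j)) x - F (kk j) x" for j x
  have telescope: "(\<lambda>j. F (kk j) x) = (\<lambda>j. F (kk 0) x + (\<Sum>i<j. g i x))" for x
  proof
    show "F (kk j) x = F (kk 0) x + (\<Sum>i<j. g i x)" for j
      by (induction j) (auto simp: g_def)
  qed
  have "phiE \<phi> {x. (1/2)^j < \<bar>g j x\<bar>} (2^j) \<le> 1" for j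
  proof -
    have "(1/2::real)^j / (1/4)^j = 2^j" by (simp add: power_divide[symmetric])
    then have "phiE \<phi> {x. (1/2)^j < \<bar>g j x\<bar>} (2^j) \<le> weak_modular \<phi> (g j) ((1/4)^j)"
      using phiE_le_weak_modular[of "(1/2)^j" \<phi> "g j" "(1/4)^j"] by simp
    also have "\<dots> \<le> 1" unfolding g_def using N kk by blast
    finally show ?thesis .
  qed
  then have "AE x in lebesgue. summable (\<lambda>j. g j x)"
    by (intro AE_summable_if_phiE_dyadic[OF mo lt p]) (auto simp: g_def)
  then have "AE x in lebesgue. convergent (\<lambda>j. F (kk j) x)"
    by eventually_elim (simp add: telescope convergent_add_const_iff summable_iff_convergent)
  then obtain f where "f \<in> borel_measurable lebesgue" "AE x in lebesgue. (\<lambda>j. F (kk j) x) \<longlonglongrightarrow> f x"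
    using AE_convergent_imp_measurable_limit[of "\<lambda>j. F (kk j)", OF F] by blast
  with kk(3) that show ?thesis by blast
qed

lemma weak_modular_le_liminf:
  assumes mo: "musielak_orlicz \<phi>" and [measurable]: "\<And>j. h j \<in> borel_measurable lebesgue"
    and lim: "AE x in lebesgue. (\<lambda>j. h j x) \<longlonglongrightarrow> f x" and lam: "0 < lam"
  shows "weak_modular \<phi> f lam \<le> liminf (\<lambda>j. weak_modular \<phi> (h j) lam)"
  unfolding weak_modular_def[of _ f]
proof (intro SUP_least)
  fix t :: real assume t: "t \<in> {0<..}"
  define u where "u = t / lam"
  have u: "0 \<le> u" using t lam by (simp add: u_def)
  note [measurable] = musielak_orlicz_measurable[OF mo u]
  define B where "B j = {x. t < \<bar>h j x\<bar>}" for j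
  have [measurable]: "B j \<in> sets lebesgue" for j unfolding B_def by (rule sets_lebesgue_abs_gt) simp
  have "phiE \<phi> {x. t < \<bar>f x\<bar>} u \<le> (\<integral>\<^sup>+ x. liminf (\<lambda>j. ennreal (\<phi> x u) * indicator (B j) x) \<partial>lebesgue)"
    unfolding phiE_def
  proof (rule nn_integral_mono_AE, rule AE_mp[OF lim], intro AE_I2 impI)
    fix x assume "(\<lambda>j. h j x) \<longlonglongrightarrow> f x"
    then have "(\<lambda>j. \<bar>h j x\<bar>) \<longlonglongrightarrow> \<bar>f x\<bar>" by (rule tendsto_rabs)
    then have "t < \<bar>f x\<bar> \<Longrightarrow> eventually (\<lambda>j. x \<in> B j) sequentially"
      unfolding B_def by (auto dest: order_tendstoD)
    then have "t < \<bar>f x\<bar> \<Longrightarrow> ennreal (\<phi> x u) \<le> liminf (\<lambda>j. ennreal (\<phi> x u) * indicator (B j) x)"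
      by (intro Liminf_bounded) (auto elim: eventually_mono)
    then show "ennreal (\<phi> x u) * indicator {x. t < \<bar>f x\<bar>} x \<le> liminf (\<lambda>j. ennreal (\<phi> x u) * indicator (B j) x)"
      by (cases "t < \<bar>f x\<bar>") auto
  qed
  also have "\<dots> \<le> liminf (\<lambda>j. phiE \<phi> (B j) u)"
    unfolding phiE_def by (rule nn_integral_liminf) measurable
  also have "\<dots> \<le> liminf (\<lambda>j. weak_modular \<phi> (h j) lam)"
    unfolding B_def u_def using t by (intro Liminf_mono always_eventually allI phiE_le_weak_modular) auto
  finally show "phiE \<phi> {x. \<bar>f x\<bar> > t} (t / lam) \<le> liminf (\<lambda>j. weak_modular \<phi> (h j) lam)"
    by (simp add: u_def)
qed

theorem WL_complete:
  assumes mo: "musielak_orlicz \<phi>" and lt: "unif_lower_type \<phi> p" and p: "p > 0"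
    and F: "\<And>k. F k \<in> WL \<phi>"
    and Cauchy: "\<And>\<epsilon>. \<epsilon> > 0 \<Longrightarrow> \<exists>N. \<forall>k\<ge>N. \<forall>m\<ge>N. WL_norm \<phi> (\<lambda>x. F k x - F m x) < \<epsilon>"
  shows "\<exists>f \<in> WL \<phi>. (\<lambda>k. WL_norm \<phi> (\<lambda>x. F k x - f x)) \<longlonglongrightarrow> 0"
proof -
  have Fm[measurable]: "\<And>k. F k \<in> borel_measurable lebesgue" using F unfolding WL_eq_weak_modular by auto
  have modular_Cauchy: "\<exists>N. \<forall>k\<ge>N. \<forall>m\<ge>N. weak_modular \<phi> (\<lambda>x. F k x - F m x) e \<le> 1"
    if "e > 0" for e
    using WL_Cauchy_imp_weak_modular_Cauchy[OF mo lt p F Cauchy that] .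
  obtain kk f where kk: "\<And>j. j \<le> kk j" and fm[measurable]: "f \<in> borel_measurable lebesgue"
    and lim: "AE x in lebesgue. (\<lambda>j. F (kk j) x) \<longlonglongrightarrow> f x"
    using weak_modular_Cauchy_AE_convergent_subseq[OF mo lt p Fm modular_Cauchy] by blast
  have tail: "\<exists>M. \<forall>k\<ge>M. weak_modular \<phi> (\<lambda>x. F k x - f x) e \<le> 1" if e: "e > 0" for e
  proof -
    obtain M where M: "\<And>k m. k \<ge> M \<Longrightarrow> m \<ge> M \<Longrightarrow> weak_modular \<phi> (\<lambda>x. F k x - F m x) e \<le> 1"
      using modular_Cauchy[OF e] by blast
    have "weak_modular \<phi> (\<lambda>x. F k x - f x) e \<le> liminf (\<lambda>j. weak_modular \<phi> (\<lambda>x. F k x - F (kk j) x) e)" for k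
    proof (rule weak_modular_le_liminf[OF mo _ _ e])
      show "AE x in lebesgue. (\<lambda>j. F k x - F (kk j) x) \<longlonglongrightarrow> F k x - f x"
        using lim by eventually_elim (intro tendsto_intros)
    qed simp
    also have "\<dots> k \<le> 1" if "k \<ge> M" for k
      using M[OF that order_trans[OF _ kk]] by (intro Liminf_le) (auto simp: eventually_sequentially)
    finally show ?thesis by blast
  qed
  obtain k where "weak_modular \<phi> (\<lambda>x. F k x - f x) 1 \<le> 1" using tail[of 1] by auto
  then have "(\<lambda>x. F k x - f x) \<in> WL \<phi>" unfolding WL_eq_weak_modular by (auto intro!: exI[of _ 1] simp: le_less_trans)
  from WL_diff[OF mo F[of k] this] have "f \<in> WL \<phi>" by simp
  moreover have "(\<lambda>k. WL_norm \<phi> (\<lambda>x. F k x - f x)) \<longlonglongrightarrow> 0"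
  proof (rule LIMSEQ_I)
    fix r :: real assume r: "r > 0"
    then obtain M where M: "\<And>k. k \<ge> M \<Longrightarrow> weak_modular \<phi> (\<lambda>x. F k x - f x) (r/2) \<le> 1"
      using tail[of "r/2"] by auto
    have "norm (WL_norm \<phi> (\<lambda>x. F k x - f x) - 0) < r" if "k \<ge> M" for k
      using WL_norm_le_if_weak_modular_le_1[OF _ M[OF that]] r by auto
    then show "\<exists>M. \<forall>k\<ge>M. norm (WL_norm \<phi> (\<lambda>x. F k x - f x) - 0) < r" by blast
  qed
  ultimately show ?thesis by blast
qed

theorem theorem2p9:
  fixes \<phi> :: "real ^ 'n::finite \<Rightarrow> real \<Rightarrow> real"
    and F :: "nat \<Rightarrow> real ^ 'n \<Rightarrow> real"
  assumes "growth_function \<phi>"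
    and "\<And>k. F k \<in> WL \<phi>"
    and "\<And>\<epsilon>. \<epsilon> > 0 \<Longrightarrow> \<exists>N. \<forall>k\<ge>N. \<forall>m\<ge>N. WL_norm \<phi> (\<lambda>x. F k x - F m x) < \<epsilon>"
  shows "\<exists>f \<in> WL \<phi>. (\<lambda>k. WL_norm \<phi> (\<lambda>x. F k x - f x)) \<longlonglongrightarrow> 0"
proof -
  obtain p where "musielak_orlicz \<phi>" "unif_lower_type \<phi> p" "p > 0"
    using assms(1) unfolding growth_function_def by blast
  then show ?thesis using assms(2,3) by (rule WL_complete)
qed

end
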